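(* Let $G$ be a classical graph with vertex set $[n]=\{1,\dots,n\}$, let $\mathcal{S}_G=\operatorname{span}\{|e_i\rangle\langle e_j| : i=j \text{ or } i\text{ adjacent to } j\}\subseteq M_n$ be its associated quantum graph, and let $k\in\mathbb{N}$. Then $G$ is $k$-connected if and only if $\mathcal{S}_G$ is $k$-connected.
   Context: $(|e_k\rangle)$ is the standard basis of $\mathbb{C}^n$. A quantum graph on $M_n$ is a linear subspace $\mathcal{S}\subseteq M_n$ closed under adjoints and containing $I_n$. A quantum graph $\mathcal{T}\subseteq M_N$ is connected if $\mathcal{T}^m=M_N$ for some $m\in\mathbb{N}$ (powers are spans of products); otherwise disconnected. For a projection $P\in M_n$ ($P=P^2=P^\dagger$), $(I_n-P)\mathcal{S}(I_n-P)$ is regarded as a quantum graph in $(I_n-P)M_n(I_n-P)\cong M_{n-\operatorname{rank}(P)}$. A projection $P$ is a separator of $\mathcal{S}$ if $(I_n-P)\mathcal{S}(I_n-P)$ is either disconnected (as a subspace of $M_{n-\operatorname{rank}(P)}$) or $1$-dimensional. $\mathcal{S}$ is $k$-connected if every separator of $\mathcal{S}$ has rank at least $k$. Classically, $G$ is $k$-connected if every set of vertices whose removal leaves a disconnected graph or a single vertex has at least $k$ elements. *)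

theory Defs
  imports "HOL-Analysis.Analysis"
begin

type_synonym 'n cmat = "complex^'n^'n"

definition csmult :: "complex \<Rightarrow> ('n::finite) cmat \<Rightarrow> 'n cmat" where
  "csmult c A = (\<chi> i j. c * A$i$j)"

definition adj :: "('n::finite) cmat \<Rightarrow> 'n cmat" where
  "adj A = (\<chi> i j. cnj (A$j$i))"

definition cspan :: "('n::finite) cmat set \<Rightarrow> 'n cmat set" where
  "cspan X = {\<Sum>x\<in>F. csmult (c x) x | F c. finite F \<and> F \<subseteq> X}"

definition csubspace :: "('n::finite) cmat set \<Rightarrow> bool" where
  "csubspace S \<longleftrightarrow> 0 \<in> S \<and> (\<forall>A\<in>S. \<forall>B\<in>S. A + B \<in> S) \<and> (\<forall>c. \<forall>A\<in>S. csmult c A \<in> S)"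

definition quantum_graph :: "('n::finite) cmat set \<Rightarrow> bool" where
  "quantum_graph S \<longleftrightarrow> csubspace S \<and> (\<forall>A\<in>S. adj A \<in> S) \<and> mat 1 \<in> S"

definition matunit :: "'n::finite \<Rightarrow> 'n \<Rightarrow> 'n cmat" where
  "matunit i j = (\<chi> a b. if a = i \<and> b = j then 1 else 0)"

definition SG :: "('n::finite \<Rightarrow> 'n \<Rightarrow> bool) \<Rightarrow> 'n cmat set" where
  "SG E = cspan {matunit i j | i j. i = j \<or> E i j}"

definition prods :: "('n::finite) cmat set \<Rightarrow> nat \<Rightarrow> 'n cmat set" where
  "prods T m = {foldr (**) As (mat 1) | As. length As = m \<and> set As \<subseteq> T}"

definition qpow :: "('n::finite) cmat set \<Rightarrow> nat \<Rightarrow> 'n cmat set" where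
  "qpow T m = cspan (prods T m)"

definition projection :: "('n::finite) cmat \<Rightarrow> bool" where
  "projection P \<longleftrightarrow> P ** P = P \<and> adj P = P"

text \<open>Compression (I-P) S (I-P) and the corner algebra (I-P) M_n (I-P)
  (identified with M_{n - rank P}).\<close>
definition compress :: "('n::finite) cmat \<Rightarrow> 'n cmat set \<Rightarrow> 'n cmat set" where
  "compress P S = (\<lambda>A. (mat 1 - P) ** A ** (mat 1 - P)) ` S"

definition corner :: "('n::finite) cmat \<Rightarrow> 'n cmat set" where
  "corner P = compress P UNIV"

definition compressed_connected :: "('n::finite) cmat \<Rightarrow> 'n cmat set \<Rightarrow> bool" where
  "compressed_connected P S \<longleftrightarrow> (\<exists>m\<ge>1. qpow (compress P S) m = corner P)"

definition one_dimensional :: "('n::finite) cmat set \<Rightarrow> bool" where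
  "one_dimensional T \<longleftrightarrow> (\<exists>B. B \<noteq> 0 \<and> T = cspan {B})"

definition separator :: "('n::finite) cmat set \<Rightarrow> 'n cmat \<Rightarrow> bool" where
  "separator S P \<longleftrightarrow> projection P \<and>
     (\<not> compressed_connected P S \<or> one_dimensional (compress P S))"

definition qk_connected :: "nat \<Rightarrow> ('n::finite) cmat set \<Rightarrow> bool" where
  "qk_connected k S \<longleftrightarrow> (\<forall>P. separator S P \<longrightarrow> rank P \<ge> k)"

definition simple_graph :: "('n::finite \<Rightarrow> 'n \<Rightarrow> bool) \<Rightarrow> bool" where
  "simple_graph E \<longleftrightarrow> (\<forall>u v. E u v \<longrightarrow> E v u) \<and> (\<forall>u. \<not> E u u)"

definition removal_disconnected :: "('n::finite \<Rightarrow> 'n \<Rightarrow> bool) \<Rightarrow> 'n set \<Rightarrow> bool" where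
  "removal_disconnected E X \<longleftrightarrow>
     (\<exists>u v. u \<notin> X \<and> v \<notin> X \<and> \<not> (\<lambda>a b. a \<notin> X \<and> b \<notin> X \<and> E a b)\<^sup>*\<^sup>* u v)"

definition classical_separator :: "('n::finite \<Rightarrow> 'n \<Rightarrow> bool) \<Rightarrow> 'n set \<Rightarrow> bool" where
  "classical_separator E X \<longleftrightarrow> removal_disconnected E X \<or> card (UNIV - X) = 1"

definition ck_connected :: "nat \<Rightarrow> ('n::finite \<Rightarrow> 'n \<Rightarrow> bool) \<Rightarrow> bool" where
  "ck_connected k E \<longleftrightarrow> (\<forall>X. classical_separator E X \<longrightarrow> card X \<ge> k)"

end

theory Submission
  imports Defs
begin

(* A classical separator X gives the coordinate projection onto span {e_x | x in X}, which has
   rank |X| and compresses S_G to the quantum graph of G - X: if G - X is disconnected, this is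
   block diagonal along a component, and if one vertex remains, it is one-dimensional.

   Conversely, let P be a quantum separator, Q = I - P, and Z the set of coordinates j with
   Q_jj = 0. Since Q is a projection, these coordinates are fixed by P, so |Z| <= rank P. If
   rank P < k, then Z is no classical separator, so G - Z is connected. The matrices Q E_ij Q
   multiply like matrix units up to the factors Q_jj, which are nonzero off Z, so walks in G - Z
   put every Q E_ij Q into a single power of Q S_G Q; as they span the corner, Q S_G Q is
   connected and hence one-dimensional. Then all rows of Q are proportional, so
   n <= rank P + 1 <= k, whereas k-connectedness forces k < n. *)

section \<open>Matrix and span algebra\<close>

lemma csmult_apply [simp]: "csmult c A $ i $ j = c * A $ i $ j"
  by (simp add: csmult_def)

lemma adj_apply [simp]: "adj A $ i $ j = cnj (A $ j $ i)"
  by (simp add: adj_def)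

lemma matunit_apply [simp]: "matunit i j $ a $ b = (if a = i \<and> b = j then 1 else 0)"
  by (simp add: matunit_def)

lemma csmult_one [simp]: "csmult 1 A = A"
  by (simp add: vec_eq_iff)

lemma csmult_csmult [simp]: "csmult a (csmult b A) = csmult (a * b) A"
  by (simp add: vec_eq_iff)

lemma csmult_matrix_mult_left: "csmult c A ** B = csmult c (A ** B)"
  by (simp add: vec_eq_iff matrix_matrix_mult_def sum_distrib_left mult.assoc)

lemma csmult_matrix_mult_right: "A ** csmult c B = csmult c (A ** B)"
  by (simp add: vec_eq_iff matrix_matrix_mult_def sum_distrib_left mult.left_commute)

lemma matrix_add_rdistrib: "((A :: 'a::semiring_1 ^ 'n ^ 'n) + B) ** C = A ** C + B ** C"
  by (simp add: vec_eq_iff matrix_matrix_mult_def sum.distrib algebra_simps)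

lemma matrix_diff_ldistrib: "(A :: 'a::ring_1 ^ 'n ^ 'n) ** (B - C) = A ** B - A ** C"
  by (simp add: vec_eq_iff matrix_matrix_mult_def sum_subtractf algebra_simps)

lemma matrix_diff_rdistrib: "((A :: 'a::ring_1 ^ 'n ^ 'n) - B) ** C = A ** C - B ** C"
  by (simp add: vec_eq_iff matrix_matrix_mult_def sum_subtractf algebra_simps)

lemma adj_diff: "adj (A - B) = adj A - adj B"
  by (simp add: vec_eq_iff)

lemma adj_mat_1: "adj (mat 1) = mat 1"
  by (simp add: vec_eq_iff mat_def)

lemma csubspace_sum:
  assumes "csubspace S" "\<And>x. x \<in> F \<Longrightarrow> f x \<in> S"
  shows "sum f F \<in> S"
proof (cases "finite F")
  case True
  then show ?thesis using assms(2)
    by (induction F rule: finite_induct) (use assms(1) in \<open>auto simp: csubspace_def\<close>)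
qed (use assms(1) in \<open>simp add: csubspace_def\<close>)

lemma cspan_least:
  assumes "csubspace S" "X \<subseteq> S"
  shows "cspan X \<subseteq> S"
  using assms unfolding cspan_def
  by (auto intro!: csubspace_sum) (auto simp: csubspace_def)

lemma csmult_in_cspan: "x \<in> X \<Longrightarrow> csmult c x \<in> cspan X"
  unfolding cspan_def by (rule CollectI, rule exI[of _ "{x}"], rule exI[of _ "\<lambda>_. c"]) auto

lemma cspan_superset: "x \<in> X \<Longrightarrow> x \<in> cspan X"
  using csmult_in_cspan[of x X 1] by simp

lemma csubspace_cspan: "csubspace (cspan X)"
  unfolding csubspace_def
proof (intro conjI ballI allI)
  show "0 \<in> cspan X"
    unfolding cspan_def by (rule CollectI, rule exI[of _ "{}"]) auto
next
  fix A B assume "A \<in> cspan X" "B \<in> cspan X"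
  then obtain F c G d where A: "A = (\<Sum>x\<in>F. csmult (c x) x)" "finite F" "F \<subseteq> X"
    and B: "B = (\<Sum>x\<in>G. csmult (d x) x)" "finite G" "G \<subseteq> X"
    unfolding cspan_def by blast
  let ?e = "\<lambda>x. (if x \<in> F then c x else 0) + (if x \<in> G then d x else 0)"
  have "(\<Sum>x\<in>F \<union> G. csmult (?e x) x) =
      (\<Sum>x\<in>F \<union> G. if x \<in> F then csmult (c x) x else 0) +
      (\<Sum>x\<in>F \<union> G. if x \<in> G then csmult (d x) x else 0)"
    unfolding sum.distrib[symmetric] by (rule sum.cong) (auto simp: vec_eq_iff distrib_right)
  also have "\<dots> = A + B"
    unfolding A B sum.If_cases[OF finite_UnI[OF A(2) B(2)]]
    by (simp add: Int_absorb1 Int_absorb2)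
  finally show "A + B \<in> cspan X"
    unfolding cspan_def using A B by (intro CollectI exI[of _ "F \<union> G"] exI[of _ ?e]) auto
next
  fix e A assume "A \<in> cspan X"
  then obtain F c where A: "A = (\<Sum>x\<in>F. csmult (c x) x)" "finite F" "F \<subseteq> X"
    unfolding cspan_def by blast
  have "csmult e A = (\<Sum>x\<in>F. csmult (e * c x) x)"
    unfolding A by (simp add: vec_eq_iff sum_distrib_left mult.assoc)
  then show "csmult e A \<in> cspan X"
    unfolding cspan_def using A by (intro CollectI exI[of _ F] exI[of _ "\<lambda>x. e * c x"]) auto
qed

lemma cspan_singleton: "cspan {B} = range (\<lambda>c. csmult c B)"
proof
  have "csubspace (range (\<lambda>c. csmult c B))"
    unfolding csubspace_def image_iff
    by (auto simp: vec_eq_iff distrib_right intro: exI[of _ 0] exI[of _ "_ + _"])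
  then show "cspan {B} \<subseteq> range (\<lambda>c. csmult c B)"
    by (rule cspan_least) (auto intro: exI[of _ 1] image_eqI[of _ _ 1])
qed (auto intro: csmult_in_cspan)

lemma foldr_mult_mem:
  assumes "\<And>A B. A \<in> S \<Longrightarrow> B \<in> S \<Longrightarrow> A ** B \<in> S" "As \<noteq> []" "set As \<subseteq> S"
  shows "foldr (**) As (mat 1) \<in> S"
  using assms(2,3)
proof (induction As)
  case (Cons X As)
  then show ?case by (cases "As = []") (auto intro: assms(1))
qed simp

lemma qpow_subset:
  assumes "csubspace S" "\<And>A B. A \<in> S \<Longrightarrow> B \<in> S \<Longrightarrow> A ** B \<in> S" "T \<subseteq> S" "m \<noteq> 0"
  shows "qpow T m \<subseteq> S"
  unfolding qpow_def prods_def
  by (rule cspan_least[OF assms(1)]) (use assms(3,4) in \<open>auto intro!: foldr_mult_mem assms(2)\<close>)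

lemma csubspace_qpow: "csubspace (qpow T m)"
  unfolding qpow_def by (rule csubspace_cspan)

lemma prods_1: "X \<in> T \<Longrightarrow> X \<in> prods T 1"
  unfolding prods_def by (intro CollectI exI[of _ "[X]"]) auto

lemma prods_Suc: "X \<in> T \<Longrightarrow> Y \<in> prods T m \<Longrightarrow> X ** Y \<in> prods T (Suc m)"
  unfolding prods_def by (auto, rule exI[of _ "X # _"]) auto

lemma card_le_rank_if_unit_rows:
  fixes P :: "'a::field ^ 'n ^ 'n"
  assumes "\<And>j. j \<in> Z \<Longrightarrow> row j P = axis j 1"
  shows "card Z \<le> rank P"
proof -
  let ?B = "(\<lambda>j. axis j (1::'a)) ` Z"
  have "?B \<subseteq> rows P"
    by (auto simp: rows_def) (metis assms)
  moreover have "vec.independent ?B"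
    by (rule vec.independent_mono[OF independent_cart_basis]) (auto simp: cart_basis_def)
  ultimately have "card ?B \<le> vec.dim (rows P)"
    by (rule vec.independent_card_le_dim)
  moreover have "card ?B = card Z"
    by (rule card_image) (auto simp: inj_on_def axis_eq_axis)
  ultimately show ?thesis
    unfolding row_rank_def_gen by simp
qed

lemma card_le_Suc_rank_if_complement_rows_collinear:
  fixes P Q :: "'a::field ^ 'n ^ 'n"
  assumes "P + Q = mat 1" "\<And>j. row j Q \<in> vec.span {w}"
  shows "CARD('n) \<le> rank P + 1"
proof -
  have "cart_basis \<subseteq> vec.span (insert w (rows P))"
  proof
    fix x :: "'a ^ 'n" assume "x \<in> cart_basis"
    then obtain j where "x = axis j 1"
      unfolding cart_basis_def by blast
    then have "x = row j P + row j Q"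
      using assms(1) by (auto simp: row_def vec_eq_iff axis_def mat_def dest: arg_cong[of _ _ "\<lambda>A. A $ j"])
    moreover have "row j P \<in> vec.span (insert w (rows P))"
      by (rule vec.span_base) (auto simp: rows_def)
    moreover have "row j Q \<in> vec.span (insert w (rows P))"
      using assms(2) vec.span_mono[of "{w}" "insert w (rows P)"] by auto
    ultimately show "x \<in> vec.span (insert w (rows P))"
      by (simp add: vec.span_add)
  qed
  then have "vec.dim (cart_basis :: ('a ^ 'n) set) \<le> vec.dim (insert w (rows P))"
    by (rule vec.dim_mono)
  also have "\<dots> \<le> vec.dim (rows P) + 1"
    by (simp add: vec.dim_insert)
  finally show ?thesis
    unfolding row_rank_def_gen vec.dim_eq_card_independent[OF independent_cart_basis] card_cart_basis .
qed

section \<open>Projections and corners\<close>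

lemma projection_complement: "projection P \<Longrightarrow> projection (mat 1 - P)"
  unfolding projection_def by (simp add: matrix_diff_ldistrib matrix_diff_rdistrib adj_diff adj_mat_1)

lemma projection_zero_diag:
  assumes "projection Q" "Q $ j $ j = 0"
  shows "Q $ a $ j = 0" "Q $ j $ a = 0"
proof -
  have "adj Q = Q"
    using assms(1) unfolding projection_def by simp
  from arg_cong[OF this, of "\<lambda>A. A $ j $ b" for b]
  have adj: "Q $ j $ b = cnj (Q $ b $ j)" for b
    by simp
  have "(\<Sum>b\<in>UNIV. of_real ((cmod (Q $ b $ j))\<^sup>2)) = (Q ** Q) $ j $ j"
    unfolding matrix_matrix_mult_def vec_lambda_beta
    by (rule sum.cong) (simp_all add: adj complex_norm_square mult.commute del: of_real_power)
  also have "\<dots> = 0"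
    using assms unfolding projection_def by simp
  finally have "(\<Sum>b\<in>UNIV. (cmod (Q $ b $ j))\<^sup>2) = 0"
    by (simp only: of_real_sum[symmetric] of_real_eq_0_iff)
  then show "Q $ a $ j = 0"
    by (simp add: sum_nonneg_eq_0_iff)
  then show "Q $ j $ a = 0"
    using adj by simp
qed

lemma card_zero_diag_complement_le_rank:
  assumes "projection P"
  shows "card {j. (mat 1 - P) $ j $ j = 0} \<le> rank P"
proof (rule card_le_rank_if_unit_rows)
  fix j assume "j \<in> {j. (mat 1 - P) $ j $ j = 0}"
  then have "(mat 1 - P) $ j $ a = 0" for a
    using projection_zero_diag(2)[OF projection_complement[OF assms]] by blast
  then have "P $ j $ a = mat 1 $ j $ a" for a
    by simp
  then show "row j P = axis j 1"
    by (auto simp: row_def axis_def vec_eq_iff mat_def)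
qed

lemma compress_subset_corner: "compress P S \<subseteq> corner P"
  unfolding corner_def compress_def by blast

lemma csubspace_corner: "csubspace (corner P)"
  unfolding csubspace_def corner_def compress_def
proof (intro conjI ballI allI)
  show "0 \<in> range (\<lambda>A. (mat 1 - P) ** A ** (mat 1 - P))"
    by (rule image_eqI[of _ _ 0]) auto
next
  fix A B
  assume "A \<in> range (\<lambda>A. (mat 1 - P) ** A ** (mat 1 - P))"
    and "B \<in> range (\<lambda>A. (mat 1 - P) ** A ** (mat 1 - P))"
  then show "A + B \<in> range (\<lambda>A. (mat 1 - P) ** A ** (mat 1 - P))"
    by (auto intro!: image_eqI[of _ _ "_ + _"] simp: matrix_add_ldistrib matrix_add_rdistrib)
next
  fix c A assume "A \<in> range (\<lambda>A. (mat 1 - P) ** A ** (mat 1 - P))"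
  then show "csmult c A \<in> range (\<lambda>A. (mat 1 - P) ** A ** (mat 1 - P))"
    by (auto intro!: image_eqI[of _ _ "csmult c _"]
        simp: csmult_matrix_mult_left csmult_matrix_mult_right)
qed

lemma corner_mult: "A \<in> corner P \<Longrightarrow> B \<in> corner P \<Longrightarrow> A ** B \<in> corner P"
  unfolding corner_def compress_def
  by (auto intro!: image_eqI[of _ _ "_ ** (mat 1 - P) ** (mat 1 - P) ** _"] simp: matrix_mul_assoc)

definition coord_proj :: "'n::finite set \<Rightarrow> 'n cmat" where
  "coord_proj X = (\<chi> i j. if i = j \<and> i \<in> X then 1 else 0)"

lemma coord_proj_apply [simp]: "coord_proj X $ i $ j = (if i = j \<and> i \<in> X then 1 else 0)"
  by (simp add: coord_proj_def)

lemma coord_proj_mult_left: "(coord_proj X ** A) $ a $ b = (if a \<in> X then A $ a $ b else 0)"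
  by (simp add: matrix_matrix_mult_def if_distrib[of "\<lambda>x. x * _"] sum.delta cong: if_cong)

lemma coord_proj_mult_right: "(A ** coord_proj X) $ a $ b = (if b \<in> X then A $ a $ b else 0)"
  by (auto simp: matrix_matrix_mult_def mult_delta_right sum.delta' cong: conj_cong)

lemma projection_coord_proj: "projection (coord_proj X)"
  unfolding projection_def by (simp add: vec_eq_iff coord_proj_mult_left)

lemma mat_1_minus_coord_proj: "mat 1 - coord_proj X = coord_proj (- X)"
  by (simp add: vec_eq_iff mat_def)

lemma rank_coord_proj: "rank (coord_proj X) = card X"
proof (rule antisym)
  let ?B = "(\<lambda>j. axis j (1::complex)) ` X"
  have "row i (coord_proj X) = (if i \<in> X then axis i 1 else 0)" for i
    by (auto simp: row_def axis_def vec_eq_iff)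
  then have "rows (coord_proj X) \<subseteq> vec.span ?B"
    by (auto simp: rows_def vec.span_zero intro: vec.span_base)
  then have "rank (coord_proj X) \<le> card ?B"
    unfolding row_rank_def_gen by (rule vec.dim_le_card) simp
  also have "\<dots> \<le> card X"
    by (rule card_image_le) simp
  finally show "rank (coord_proj X) \<le> card X" .
  show "card X \<le> rank (coord_proj X)"
    by (rule card_le_rank_if_unit_rows) (auto simp: row_def axis_def vec_eq_iff)
qed

lemma coord_proj_sandwich_apply:
  "(coord_proj Y ** A ** coord_proj Y) $ a $ b = (if a \<in> Y \<and> b \<in> Y then A $ a $ b else 0)"
  by (simp add: coord_proj_mult_left coord_proj_mult_right)

lemma compress_coord_proj:
  "compress (coord_proj X) S = (\<lambda>A. coord_proj (- X) ** A ** coord_proj (- X)) ` S"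
  unfolding compress_def mat_1_minus_coord_proj ..

section \<open>Classical separators give quantum separators\<close>

lemma SG_nonzero_entry:
  assumes "A \<in> SG E" "A $ a $ b \<noteq> 0"
  shows "a = b \<or> E a b"
proof -
  have "SG E \<subseteq> {A. \<forall>a b. A $ a $ b \<noteq> 0 \<longrightarrow> a = b \<or> E a b}"
    unfolding SG_def
  proof (rule cspan_least)
    show "csubspace {A. \<forall>a b. A $ a $ b \<noteq> 0 \<longrightarrow> a = b \<or> E a b}"
      unfolding csubspace_def by (auto, metis add.right_neutral add_0)
  qed (auto split: if_splits)
  then show ?thesis
    using assms by blast
qed

lemma matunit_in_SG: "i = j \<or> E i j \<Longrightarrow> matunit i j \<in> SG E"
  unfolding SG_def by (rule cspan_superset) blast

definition block_diag :: "'n::finite set \<Rightarrow> 'n cmat set" where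
  "block_diag C = {A. \<forall>a b. (a \<in> C) \<noteq> (b \<in> C) \<longrightarrow> A $ a $ b = 0}"

lemma csubspace_block_diag: "csubspace (block_diag C)"
  unfolding block_diag_def csubspace_def by auto

lemma block_diag_mult: "A \<in> block_diag C \<Longrightarrow> B \<in> block_diag C \<Longrightarrow> A ** B \<in> block_diag C"
  unfolding block_diag_def matrix_matrix_mult_def
  by (auto intro!: sum.neutral) (metis mult_zero_left mult_zero_right)+

lemma compress_coord_proj_SG_subset_block_diag:
  assumes "simple_graph E"
  shows "compress (coord_proj X) (SG E) \<subseteq>
    block_diag {w. (\<lambda>a b. a \<notin> X \<and> b \<notin> X \<and> E a b)\<^sup>*\<^sup>* u w}"
    (is "_ \<subseteq> block_diag {w. ?R\<^sup>*\<^sup>* u w}")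
proof (clarsimp simp: compress_coord_proj)
  fix A assume A: "A \<in> SG E"
  show "coord_proj (- X) ** A ** coord_proj (- X) \<in> block_diag {w. ?R\<^sup>*\<^sup>* u w}"
    unfolding block_diag_def
  proof (intro CollectI allI impI, rule ccontr)
    fix a b assume ab: "(a \<in> {w. ?R\<^sup>*\<^sup>* u w}) \<noteq> (b \<in> {w. ?R\<^sup>*\<^sup>* u w})"
      and "(coord_proj (- X) ** A ** coord_proj (- X)) $ a $ b \<noteq> 0"
    then have "a \<notin> X" "b \<notin> X" "A $ a $ b \<noteq> 0"
      by (auto simp: coord_proj_sandwich_apply split: if_splits)
    moreover have "a \<noteq> b"
      using ab by blast
    ultimately have "?R a b" "?R b a"
      using SG_nonzero_entry[OF A] assms unfolding simple_graph_def by blast+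
    with ab show False
      by (auto intro: rtranclp.rtrancl_into_rtrancl)
  qed
qed

lemma not_compressed_connected_if_removal_disconnected:
  assumes "simple_graph E" "removal_disconnected E X"
  shows "\<not> compressed_connected (coord_proj X) (SG E)"
proof
  define R where "R a b \<longleftrightarrow> a \<notin> X \<and> b \<notin> X \<and> E a b" for a b
  obtain u v where uv: "u \<notin> X" "v \<notin> X" "\<not> R\<^sup>*\<^sup>* u v"
    using assms(2) unfolding removal_disconnected_def R_def by blast
  define C where "C = {w. R\<^sup>*\<^sup>* u w}"
  let ?T = "compress (coord_proj X) (SG E)"
  have "?T \<subseteq> block_diag C"
    using compress_coord_proj_SG_subset_block_diag[OF assms(1), of X u]
    unfolding C_def R_def .
  then have "qpow ?T m \<subseteq> block_diag C" if "m \<noteq> 0" for m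
    using that by (intro qpow_subset csubspace_block_diag) (auto intro: block_diag_mult)
  moreover have "matunit u v \<in> corner (coord_proj X)"
    unfolding corner_def compress_coord_proj
    by (rule image_eqI[of _ _ "matunit u v"]) (auto simp: vec_eq_iff coord_proj_sandwich_apply uv)
  moreover have "matunit u v \<notin> block_diag C"
  proof -
    have "u \<in> C" "v \<notin> C"
      using uv(3) unfolding C_def by auto
    then show ?thesis
      unfolding block_diag_def by (auto intro!: exI[of _ u] exI[of _ v])
  qed
  moreover assume "compressed_connected (coord_proj X) (SG E)"
  then obtain m where "m \<noteq> 0" "qpow ?T m = corner (coord_proj X)"
    unfolding compressed_connected_def by (metis not_one_le_zero)
  ultimately show False
    by blast
qed

lemma one_dimensional_compress_if_single_vertex:
  assumes "UNIV - X = {u}"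
  shows "one_dimensional (compress (coord_proj X) (SG E))"
proof -
  have "a \<notin> X \<longleftrightarrow> a = u" for a
    using assms by blast
  then have sandwich: "coord_proj (- X) ** A ** coord_proj (- X) = csmult (A $ u $ u) (matunit u u)" for A
    by (auto simp: vec_eq_iff coord_proj_sandwich_apply)
  have "compress (coord_proj X) (SG E) = cspan {matunit u u}"
  proof
    show "compress (coord_proj X) (SG E) \<subseteq> cspan {matunit u u}"
      unfolding compress_coord_proj sandwich by (auto intro: csmult_in_cspan)
    show "cspan {matunit u u} \<subseteq> compress (coord_proj X) (SG E)"
    proof
      fix Y assume "Y \<in> cspan {matunit u u}"
      then obtain c where c: "Y = csmult c (matunit u u)"
        unfolding cspan_singleton by blast
      have "Y \<in> SG E"
        unfolding c SG_def by (rule csmult_in_cspan) blast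
      moreover have "Y = csmult (Y $ u $ u) (matunit u u)"
        unfolding c by (simp add: vec_eq_iff)
      ultimately show "Y \<in> compress (coord_proj X) (SG E)"
        unfolding compress_coord_proj sandwich by blast
    qed
  qed
  moreover have "matunit u u \<noteq> 0"
    by (auto simp: vec_eq_iff)
  ultimately show ?thesis
    unfolding one_dimensional_def by blast
qed

lemma separator_coord_proj:
  assumes "simple_graph E" "classical_separator E X"
  shows "separator (SG E) (coord_proj X)"
  using assms(2) not_compressed_connected_if_removal_disconnected[OF assms(1)]
    one_dimensional_compress_if_single_vertex
  unfolding classical_separator_def separator_def
  by (metis card_1_singletonE projection_coord_proj)

section \<open>Quantum separators give classical separators\<close>

lemma relpowp_extend:
  assumes "(R ^^ l) u v" "R v v" "l \<le> m"
  shows "(R ^^ m) u v"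
  using assms(3)
proof (induction m rule: dec_induct)
  case (step m)
  then show ?case
    using assms(2) by (auto intro: relcomppI)
qed (use assms(1) in simp)

lemma relpowp_uniform_length:
  fixes R :: "'a::finite \<Rightarrow> 'a \<Rightarrow> bool"
  assumes "\<And>u v. u \<in> V \<Longrightarrow> v \<in> V \<Longrightarrow> R\<^sup>*\<^sup>* u v" "\<And>v. v \<in> V \<Longrightarrow> R v v"
  obtains N where "\<And>u v. u \<in> V \<Longrightarrow> v \<in> V \<Longrightarrow> (R ^^ Suc N) u v"
proof -
  have "\<forall>u v. \<exists>l. u \<in> V \<longrightarrow> v \<in> V \<longrightarrow> (R ^^ l) u v"
    using assms(1) by (meson rtranclp_power)
  then obtain f where f: "\<And>u v. u \<in> V \<Longrightarrow> v \<in> V \<Longrightarrow> (R ^^ f u v) u v"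
    by metis
  define N where "N = Max (range (case_prod f))"
  have bound: "f u v \<le> Suc N" for u v
    unfolding N_def by (rule le_SucI, rule Max_ge) auto
  show thesis
    by (rule that, rule relpowp_extend[OF f assms(2) bound])
qed

definition corner_unit :: "'n::finite cmat \<Rightarrow> 'n \<Rightarrow> 'n \<Rightarrow> 'n cmat" where
  "corner_unit Q i j = Q ** matunit i j ** Q"

lemma corner_unit_apply: "corner_unit Q i j $ a $ b = Q $ a $ i * Q $ j $ b"
proof -
  have "(Q ** matunit i j) $ a $ c = (if c = j then Q $ a $ i else 0)" for c
    by (simp add: matrix_matrix_mult_def if_distrib[of "\<lambda>x. _ * x"] sum.delta' cong: if_cong)
  then show ?thesis
    unfolding corner_unit_def matrix_matrix_mult_def[of "Q ** matunit i j"]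
    by (simp add: if_distrib[of "\<lambda>x. x * _"] sum.delta cong: if_cong)
qed

lemma corner_unit_mult:
  assumes "Q ** Q = Q"
  shows "corner_unit Q i j ** corner_unit Q k l = csmult (Q $ j $ k) (corner_unit Q i l)"
proof -
  have "(corner_unit Q i j ** corner_unit Q k l) $ a $ b = Q $ a $ i * (Q ** Q) $ j $ k * Q $ l $ b" for a b
    by (simp add: matrix_matrix_mult_def corner_unit_apply sum_distrib_left sum_distrib_right mult_ac)
  then show ?thesis
    using assms by (simp add: vec_eq_iff corner_unit_apply mult_ac)
qed

lemma sandwich_eq_sum_corner_units:
  "Q ** A ** Q = (\<Sum>i\<in>UNIV. \<Sum>j\<in>UNIV. csmult (A $ i $ j) (corner_unit Q i j))"
proof -
  have "(Q ** A ** Q) $ a $ b = (\<Sum>i\<in>UNIV. \<Sum>j\<in>UNIV. A $ i $ j * (Q $ a $ i * Q $ j $ b))" for a b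
  proof -
    have "(Q ** A ** Q) $ a $ b = (\<Sum>j\<in>UNIV. \<Sum>i\<in>UNIV. A $ i $ j * (Q $ a $ i * Q $ j $ b))"
      unfolding matrix_matrix_mult_def by (simp add: sum_distrib_left sum_distrib_right mult_ac)
    also have "\<dots> = (\<Sum>i\<in>UNIV. \<Sum>j\<in>UNIV. A $ i $ j * (Q $ a $ i * Q $ j $ b))"
      by (rule sum.swap)
    finally show ?thesis .
  qed
  then show ?thesis
    by (simp add: vec_eq_iff corner_unit_apply sum_component)
qed

lemma compressed_connected_if_corner_units_in_qpow:
  assumes "m \<noteq> 0" "\<And>i j. corner_unit (mat 1 - P) i j \<in> qpow (compress P S) m"
  shows "compressed_connected P S"
proof -
  have "corner P \<subseteq> qpow (compress P S) m"
  proof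
    fix Y assume "Y \<in> corner P"
    then obtain A where Y: "Y = (mat 1 - P) ** A ** (mat 1 - P)"
      unfolding corner_def compress_def by blast
    show "Y \<in> qpow (compress P S) m"
      unfolding Y sandwich_eq_sum_corner_units
      using csubspace_qpow assms(2) by (intro csubspace_sum) (auto simp: csubspace_def)
  qed
  moreover have "qpow (compress P S) m \<subseteq> corner P"
    by (rule qpow_subset[OF csubspace_corner corner_mult compress_subset_corner assms(1)])
  ultimately show ?thesis
    using assms(1) unfolding compressed_connected_def by (intro exI[of _ m]) auto
qed

lemma corner_unit_walk_in_prods:
  assumes "Q ** Q = Q" "\<And>a b. R a b \<Longrightarrow> Q $ b $ b \<noteq> 0 \<and> corner_unit Q a b \<in> T"
  shows "(R ^^ Suc l) i j \<Longrightarrow> \<exists>c. c \<noteq> 0 \<and> csmult c (corner_unit Q i j) \<in> prods T (Suc l)"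
proof (induction l arbitrary: i)
  case 0
  then have "R i j"
    by auto
  then have "corner_unit Q i j \<in> T"
    using assms(2) by blast
  then show ?case
    using prods_1[of "corner_unit Q i j" T] by (intro exI[of _ 1]) simp
next
  case (Suc l)
  then obtain i' where i': "R i i'" "(R ^^ Suc l) i' j"
    by (blast elim: relpowp_Suc_E2)
  with Suc.IH obtain c where c: "c \<noteq> 0" "csmult c (corner_unit Q i' j) \<in> prods T (Suc l)"
    by blast
  have "corner_unit Q i i' ** csmult c (corner_unit Q i' j) \<in> prods T (Suc (Suc l))"
    using assms(2)[OF i'(1)] c(2) by (blast intro: prods_Suc)
  moreover have "corner_unit Q i i' ** csmult c (corner_unit Q i' j) =
      csmult (c * Q $ i' $ i') (corner_unit Q i j)"
    by (simp add: csmult_matrix_mult_right corner_unit_mult[OF assms(1)] mult.commute)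
  moreover have "c * Q $ i' $ i' \<noteq> 0"
    using c(1) assms(2)[OF i'(1)] by simp
  ultimately show ?case
    by metis
qed

lemma corner_unit_in_qpow_if_walks:
  assumes "projection Q" "\<And>a b. R a b \<Longrightarrow> Q $ b $ b \<noteq> 0 \<and> corner_unit Q a b \<in> T"
    "\<And>u v. Q $ u $ u \<noteq> 0 \<Longrightarrow> Q $ v $ v \<noteq> 0 \<Longrightarrow> (R ^^ Suc N) u v"
  shows "corner_unit Q i j \<in> qpow T (Suc N)"
proof (cases "Q $ i $ i \<noteq> 0 \<and> Q $ j $ j \<noteq> 0")
  case True
  have "Q ** Q = Q"
    using assms(1) unfolding projection_def by simp
  moreover have "(R ^^ Suc N) i j"
    using assms(3) True by blast
  ultimately obtain c where c: "c \<noteq> 0" "csmult c (corner_unit Q i j) \<in> prods T (Suc N)"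
    using corner_unit_walk_in_prods[of Q R T] assms(2) by blast
  from c(2) have "csmult (1 / c) (csmult c (corner_unit Q i j)) \<in> qpow T (Suc N)"
    unfolding qpow_def by (rule csmult_in_cspan)
  with c(1) show ?thesis
    by simp
next
  case False
  then have "Q $ a $ i = 0 \<or> Q $ j $ b = 0" for a b
    using projection_zero_diag[OF assms(1)] by blast
  then have "corner_unit Q i j = 0"
    by (simp add: vec_eq_iff corner_unit_apply)
  then show ?thesis
    using csubspace_qpow unfolding csubspace_def by metis
qed

lemma compressed_connected_if_not_removal_disconnected:
  assumes "projection P" "\<not> removal_disconnected E {j. (mat 1 - P) $ j $ j = 0}"
  shows "compressed_connected P (SG E)"
proof -
  define Q where "Q = mat 1 - P"
  define V where "V = {j. Q $ j $ j \<noteq> 0}"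
  \<comment> \<open>the loops let walks be padded to a common length\<close>
  define R where "R a b \<longleftrightarrow> a \<in> V \<and> b \<in> V \<and> (a = b \<or> E a b)" for a b
  let ?T = "compress P (SG E)"
  have Q: "projection Q"
    unfolding Q_def by (rule projection_complement[OF assms(1)])
  have step: "Q $ b $ b \<noteq> 0 \<and> corner_unit Q a b \<in> ?T" if "R a b" for a b
    using that matunit_in_SG[of a b E] unfolding R_def V_def compress_def corner_unit_def Q_def by auto
  have "R\<^sup>*\<^sup>* u v" if "u \<in> V" "v \<in> V" for u v
  proof -
    have "(\<lambda>a b. a \<in> V \<and> b \<in> V \<and> E a b)\<^sup>*\<^sup>* u v"
      using assms(2) that unfolding removal_disconnected_def V_def Q_def by auto
    then show ?thesis
      by (rule rtranclp_mono[THEN predicate2D, rotated]) (auto simp: R_def)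
  qed
  moreover have "R v v" if "v \<in> V" for v
    using that unfolding R_def by simp
  ultimately obtain N where N: "\<And>u v. u \<in> V \<Longrightarrow> v \<in> V \<Longrightarrow> (R ^^ Suc N) u v"
    using relpowp_uniform_length[of V R] by blast
  have "corner_unit Q i j \<in> qpow ?T (Suc N)" for i j
    using Q step N[unfolded V_def mem_Collect_eq] by (rule corner_unit_in_qpow_if_walks)
  then have "corner_unit (mat 1 - P) i j \<in> qpow ?T (Suc N)" for i j
    unfolding Q_def .
  then show ?thesis
    by (rule compressed_connected_if_corner_units_in_qpow[rotated]) simp
qed

lemma rows_collinear_if_one_dimensional:
  assumes "projection Q" "one_dimensional S" "\<And>j. corner_unit Q j j \<in> S"
  obtains w where "\<And>j. row j Q \<in> vec.span {w}"
proof (cases "\<exists>i. Q $ i $ i \<noteq> 0")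
  case False
  then have "row j Q = 0" for j
    using projection_zero_diag(2)[OF assms(1), of j] by (simp add: row_def vec_eq_iff)
  then show thesis
    using that[of 0] by (simp add: vec.span_zero)
next
  case True
  then obtain i where i: "Q $ i $ i \<noteq> 0"
    by blast
  obtain B where B: "S = range (\<lambda>c. csmult c B)"
    using assms(2) unfolding one_dimensional_def cspan_singleton by blast
  then obtain b where b: "corner_unit Q i i = csmult b B"
    using assms(3) by blast
  have "b \<noteq> 0"
    using arg_cong[OF b, of "\<lambda>A. A $ i $ i"] i by (auto simp: corner_unit_apply)
  have "row j Q \<in> vec.span {row i Q}" for j
  proof (cases "Q $ j $ j = 0")
    case True
    then have "row j Q = 0"
      using projection_zero_diag(2)[OF assms(1) True] by (simp add: row_def vec_eq_iff)
    then show ?thesis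
      by (simp add: vec.span_zero)
  next
    case False
    obtain a where a: "corner_unit Q j j = csmult a B"
      using assms(3) B by blast
    have "Q $ j $ j * Q $ j $ x = a / b * (Q $ j $ i * Q $ i $ x)" for x
      using arg_cong[OF a, of "\<lambda>A. A $ j $ x"] arg_cong[OF b, of "\<lambda>A. A $ j $ x"] \<open>b \<noteq> 0\<close>
      by (simp add: corner_unit_apply)
    then have "row j Q = (a / b * Q $ j $ i / Q $ j $ j) *s row i Q"
      using False \<open>b \<noteq> 0\<close> by (auto simp: row_def vec_eq_iff field_simps)
    then show ?thesis
      by (simp add: vec.span_scale vec.span_base)
  qed
  then show thesis
    by (rule that)
qed

lemma card_le_Suc_rank_if_separator:
  fixes E :: "'n::finite \<Rightarrow> 'n \<Rightarrow> bool"
  assumes "separator (SG E) P" "\<not> removal_disconnected E {j. (mat 1 - P) $ j $ j = 0}"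
  shows "CARD('n) \<le> rank P + 1"
proof -
  have P: "projection P"
    using assms(1) unfolding separator_def by simp
  then have "one_dimensional (compress P (SG E))"
    using assms compressed_connected_if_not_removal_disconnected unfolding separator_def by blast
  moreover have "corner_unit (mat 1 - P) j j \<in> compress P (SG E)" for j
    unfolding compress_def corner_unit_def using matunit_in_SG by blast
  ultimately obtain w where "\<And>j. row j (mat 1 - P) \<in> vec.span {w}"
    using rows_collinear_if_one_dimensional[OF projection_complement[OF P], of "compress P (SG E)"]
    by blast
  then show ?thesis
    using card_le_Suc_rank_if_complement_rows_collinear[of P "mat 1 - P" w] by simp
qed

lemma ck_connected_less_card:
  fixes E :: "'n::finite \<Rightarrow> 'n \<Rightarrow> bool"
  assumes "ck_connected k E"
  shows "k < CARD('n)"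
proof -
  have "classical_separator E (UNIV - {undefined})"
    unfolding classical_separator_def by (simp add: Diff_Diff_Int)
  then have "k \<le> card (UNIV - {undefined :: 'n})"
    using assms unfolding ck_connected_def by blast
  moreover have "card (UNIV - {undefined :: 'n}) = CARD('n) - 1"
    by (simp add: card_Diff_subset)
  moreover have "0 < CARD('n)"
    by (simp add: finite_UNIV_card_ge_0)
  ultimately show ?thesis
    by linarith
qed

lemma qk_connected_if_ck_connected:
  fixes E :: "'n::finite \<Rightarrow> 'n \<Rightarrow> bool"
  assumes "ck_connected k E"
  shows "qk_connected k (SG E)"
  unfolding qk_connected_def
proof (intro allI impI)
  fix P assume sep: "separator (SG E) P"
  define Z where "Z = {j. (mat 1 - P) $ j $ j = 0}"
  have "card Z \<le> rank P"
    using sep card_zero_diag_complement_le_rank unfolding separator_def Z_def by blast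
  show "k \<le> rank P"
  proof (rule ccontr)
    assume "\<not> k \<le> rank P"
    with \<open>card Z \<le> rank P\<close> assms have "\<not> classical_separator E Z"
      unfolding ck_connected_def by fastforce
    then have "CARD('n) \<le> rank P + 1"
      using card_le_Suc_rank_if_separator[OF sep] unfolding classical_separator_def Z_def by blast
    with \<open>\<not> k \<le> rank P\<close> ck_connected_less_card[OF assms] show False
      by linarith
  qed
qed

lemma ck_connected_if_qk_connected:
  assumes "simple_graph E" "qk_connected k (SG E)"
  shows "ck_connected k E"
  using assms(2) separator_coord_proj[OF assms(1)] rank_coord_proj
  unfolding ck_connected_def qk_connected_def by metis

theorem proposition4p4:
  fixes E :: "'n::finite \<Rightarrow> 'n \<Rightarrow> bool" and k :: nat
  assumes "simple_graph E"
  shows "ck_connected k E \<longleftrightarrow> qk_connected k (SG E)"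
  using qk_connected_if_ck_connected ck_connected_if_qk_connected[OF assms] by blast

end
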